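(* There exist supplementary difference sets in $\mathbb{Z}_{59}$ with parameters $(59;28,22;21)$; that is, there exist subsets $X,Y\subseteq\mathbb{Z}_{59}$ with $|X|=28$, $|Y|=22$ such that for every nonzero $c\in\mathbb{Z}_{59}$, the number of ordered pairs $(a,b)\in X\times X$ with $a-b\equiv c\pmod{59}$ plus the number of ordered pairs $(a,b)\in Y\times Y$ with $a-b\equiv c\pmod{59}$ equals $21$.
   Context: $\mathbb{Z}_v$ denotes the ring of integers modulo $v$. Subsets $X_1,\dots,X_t\subseteq\mathbb{Z}_v$ with $|X_i|=k_i$ are supplementary difference sets (SDS) with parameters $(v;k_1,\dots,k_t;\lambda)$ if for every nonzero $c\in\mathbb{Z}_v$ there are exactly $\lambda$ ordered triples $(a,b,i)$ with $a,b\in X_i$ and $a-b\equiv c\pmod v$. *)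

theory Defs
  imports Main
begin

text \<open>Z_v is represented by the residues {0..<v} (as integers); subtraction is taken mod v.
  Ordered triples (a,b,i) with a,b in X_i and a - b = c (mod v).\<close>

definition sds :: "int \<Rightarrow> int set list \<Rightarrow> nat list \<Rightarrow> nat \<Rightarrow> bool" where
  "sds v Xs ks lam \<longleftrightarrow>
     length Xs = length ks \<and>
     (\<forall>i < length Xs. Xs ! i \<subseteq> {0..<v} \<and> card (Xs ! i) = ks ! i) \<and>
     (\<forall>c \<in> {1..<v}.
        card {(a, b, i). i < length Xs \<and> a \<in> Xs ! i \<and> b \<in> Xs ! i \<and> (a - b) mod v = c} = lam)"

end

theory Submission
  imports Defs
begin

text \<open>
  The theorem is witnessed by an explicit pair of sets, so the work is to
  reduce the defining condition of supplementary difference sets to a finite computation.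
  For a set X of residues and a fixed difference c, the ordered pairs (a,b) in X with
  a - b = c (mod v) correspond bijectively to the elements a of X whose shift
  (a - c) mod v lies again in X (the periodic autocorrelation of X at c).  The triples
  (a,b,i) counted in the definition form a disjoint union over the index i, so their
  number is the sum of these autocorrelations.  For sets given as lists of distinct
  residues the autocorrelations are lengths of filtered lists, which yields a criterion
  for SDS that is checked by evaluation on the concrete lists for (59; 28, 22; 21).
\<close>

definition diff_pairs :: "int \<Rightarrow> int set \<Rightarrow> int \<Rightarrow> (int \<times> int) set" where
  "diff_pairs v X c = {(a, b). a \<in> X \<and> b \<in> X \<and> (a - b) mod v = c}"

lemma diff_pairs_as_image:
  fixes X :: "int set" and v c :: int
  assumes X: "X \<subseteq> {0..<v}" and c: "c \<in> {0..<v}"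
  shows "diff_pairs v X c = (\<lambda>a. (a, (a - c) mod v)) ` {a \<in> X. (a - c) mod v \<in> X}"
proof (rule set_eqI, rule iffI)
  fix p assume "p \<in> diff_pairs v X c"
  then obtain a b where p: "p = (a, b)" "a \<in> X" "b \<in> X" "(a - b) mod v = c"
    by (auto simp: diff_pairs_def)
  have "(a - c) mod v = (a - (a - b)) mod v"
    using p(4) by (metis mod_diff_right_eq)
  also have "\<dots> = b" using X p(3) by auto
  finally show "p \<in> (\<lambda>a. (a, (a - c) mod v)) ` {a \<in> X. (a - c) mod v \<in> X}"
    using p by auto
next
  fix p assume "p \<in> (\<lambda>a. (a, (a - c) mod v)) ` {a \<in> X. (a - c) mod v \<in> X}"
  then obtain a where p: "p = (a, (a - c) mod v)" "a \<in> X" "(a - c) mod v \<in> X" by auto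
  have "(a - (a - c) mod v) mod v = (a - (a - c)) mod v" by (simp add: mod_diff_right_eq)
  also have "\<dots> = c" using c by simp
  finally have "(a - (a - c) mod v) mod v = c" .
  with p show "p \<in> diff_pairs v X c" unfolding diff_pairs_def by blast
qed

lemma card_diff_pairs:
  fixes X :: "int set" and v c :: int
  assumes "X \<subseteq> {0..<v}" and "c \<in> {0..<v}"
  shows "card (diff_pairs v X c) = card {a \<in> X. (a - c) mod v \<in> X}"
  unfolding diff_pairs_as_image[OF assms] by (rule card_image) (auto simp: inj_on_def)

lemma finite_diff_pairs:
  assumes "finite X"
  shows "finite (diff_pairs v X c)"
  unfolding diff_pairs_def by (rule finite_subset[of _ "X \<times> X"]) (use assms in auto)

text \<open>The triples counted in the SDS condition split, according to their index i, into
  disjoint tagged copies of the pair sets; so their number is the sum over i.\<close>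
lemma card_sds_triples:
  fixes Xs :: "int set list"
  assumes fin: "\<forall>X \<in> set Xs. finite X"
  shows "card {(a, b, i). i < length Xs \<and> a \<in> Xs ! i \<and> b \<in> Xs ! i \<and> (a - b) mod v = c}
       = (\<Sum>i < length Xs. card (diff_pairs v (Xs ! i) c))"
proof -
  let ?tag = "\<lambda>i (a::int, b::int). (a, b, i)"
  have split: "{(a, b, i). i < length Xs \<and> a \<in> Xs ! i \<and> b \<in> Xs ! i \<and> (a - b) mod v = c}
      = (\<Union>i < length Xs. ?tag i ` diff_pairs v (Xs ! i) c)"
    by (force simp: diff_pairs_def)
  have fin_pairs: "finite (diff_pairs v (Xs ! i) c)" if "i < length Xs" for i
    using fin that by (simp add: finite_diff_pairs)
  have "card (\<Union>i < length Xs. ?tag i ` diff_pairs v (Xs ! i) c)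
      = (\<Sum>i < length Xs. card (?tag i ` diff_pairs v (Xs ! i) c))"
    by (rule card_UN_disjoint) (auto simp: fin_pairs)
  also have "\<dots> = (\<Sum>i < length Xs. card (diff_pairs v (Xs ! i) c))"
    by (intro sum.cong refl card_image) (auto simp: inj_on_def)
  finally show ?thesis unfolding split .
qed

lemma card_filter_set:
  fixes zs :: "'a list"
  assumes "distinct zs"
  shows "card {a \<in> set zs. P a} = length (filter P zs)"
proof -
  have "{a \<in> set zs. P a} = {x. P x} \<inter> set zs" by auto
  thus ?thesis using assms by (simp add: distinct_length_filter)
qed

lemma sds_from_lists:
  fixes xss :: "int list list"
  assumes dist: "\<forall>xs \<in> set xss. distinct xs"
    and range: "\<forall>xs \<in> set xss. \<forall>x \<in> set xs. 0 \<le> x \<and> x < v"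
    and counts: "\<forall>c \<in> set [1..v-1].
       sum_list (map (\<lambda>xs. length (filter (\<lambda>a. (a - c) mod v \<in> set xs) xs)) xss) = lam"
  shows "sds v (map set xss) (map length xss) lam"
  unfolding sds_def
proof (intro conjI ballI allI impI)
  show "length (map set xss) = length (map length xss)" by simp
next
  fix i assume "i < length (map set xss)"
  then have i: "i < length xss" and xs: "xss ! i \<in> set xss" by simp_all
  have "\<forall>x \<in> set (xss ! i). 0 \<le> x \<and> x < v" using range xs by blast
  then show "map set xss ! i \<subseteq> {0..<v}" using i by auto
  show "card (map set xss ! i) = map length xss ! i"
    using dist xs i by (simp add: distinct_card)
next
  fix c assume c: "c \<in> {1..<v}"
  have autocorr: "card (diff_pairs v (set xs) c) = length (filter (\<lambda>a. (a - c) mod v \<in> set xs) xs)"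
    if "xs \<in> set xss" for xs
  proof -
    have "set xs \<subseteq> {0..<v}" using range that by auto
    with c dist that show ?thesis by (simp add: card_diff_pairs card_filter_set)
  qed
  have fin: "\<forall>X \<in> set (map set xss). finite X" by simp
  have in_range: "c \<in> set [1..v-1]" using c by simp
  have "card {(a, b, i). i < length (map set xss) \<and> a \<in> map set xss ! i
          \<and> b \<in> map set xss ! i \<and> (a - b) mod v = c}
      = (\<Sum>i < length (map set xss). card (diff_pairs v (map set xss ! i) c))"
    by (rule card_sds_triples[OF fin])
  also have "\<dots> = (\<Sum>i < length xss. length (filter (\<lambda>a. (a - c) mod v \<in> set (xss ! i)) (xss ! i)))"
    by (rule sum.cong) (simp_all add: autocorr)
  also have "\<dots> = sum_list (map (\<lambda>xs. length (filter (\<lambda>a. (a - c) mod v \<in> set xs) xs)) xss)"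
    by (simp add: sum_list_sum_nth atLeast0LessThan)
  also have "\<dots> = lam" using counts in_range by blast
  finally show "card {(a, b, i). i < length (map set xss) \<and> a \<in> map set xss ! i
          \<and> b \<in> map set xss ! i \<and> (a - b) mod v = c} = lam" .
qed

definition X59 :: "int list" where
  "X59 = [0,2,9,10,15,19,20,22,23,24,26,27,29,30,31,36,38,40,41,42,44,46,47,49,50,52,55,56]"

definition Y59 :: "int list" where
  "Y59 = [0,7,8,10,12,15,16,18,23,24,28,30,31,32,42,43,49,52,53,54,56,58]"

lemma X59_Y59_counts:
  "\<forall>c \<in> set [1..59-1]. sum_list (map (\<lambda>xs. length (filter (\<lambda>a. (a - c) mod 59 \<in> set xs) xs))
     [X59, Y59]) = (21::nat)"
  unfolding X59_def Y59_def by code_simp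

theorem mainTheorem7:
  shows "\<exists>X Y :: int set. sds 59 [X, Y] [28, 22] 21"
proof -
  have "sds 59 (map set [X59, Y59]) (map length [X59, Y59]) 21"
    by (rule sds_from_lists[OF _ _ X59_Y59_counts]) (simp_all add: X59_def Y59_def)
  moreover have "length X59 = 28" and "length Y59 = 22"
    by (simp_all add: X59_def Y59_def)
  ultimately have "sds 59 [set X59, set Y59] [28, 22] 21" by simp
  then show ?thesis by blast
qed

end
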